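(* For every integer $n\ge 1$, $5^n$ is selfcondensable; i.e., $5^n$ can be obtained from the digits of its own decimal representation (each used exactly once) using addition, subtraction, multiplication, division, powers and factorials.
   Context: For a finite nonempty multiset $S$ of real numbers, $V(S)$ is the smallest set of real numbers such that: (1) if $|S|=1$ then $S\subseteq V(S)$; (2) if $|S|\ge 2$, then for all nonempty multisets $A,B$ with $A+B=S$ (multiplicities add) and all $a\in V(A)$, $b\in V(B)$, each of $a+b,\ a-b,\ b-a,\ ab,\ a/b,\ b/a,\ a^b,\ b^a$ lies in $V(S)$ whenever it is a well-defined real number; (3) if $a\in V(S)$ is a nonnegative integer then $a!\in V(S)$ (with $0!=1$). A positive integer $N$ is selfcondensable if $N\in V(S_N)$, where $S_N$ is the multiset of the digits of the decimal representation of $N$ (each digit counted with its multiplicity). *)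

theory Defs
  imports Complex_Main "HOL-Library.Multiset"
begin

fun digits :: "nat \<Rightarrow> nat list" where
  "digits n = (if n = 0 then [] else n mod 10 # digits (n div 10))"

definition digit_mset :: "nat \<Rightarrow> real multiset" where
  "digit_mset N = mset (map real (digits N))"

text \<open>Convention: a > 0: a powr b; a = 0 and b > 0: 0; a < 0 and b an integer: a powi b.
  (0^0 and negative bases with non-integer exponents are treated as undefined.)\<close>
definition real_pow_val :: "real \<Rightarrow> real \<Rightarrow> real \<Rightarrow> bool" where
  "real_pow_val a b c \<longleftrightarrow>
     (a > 0 \<and> c = a powr b) \<or>
     (a = 0 \<and> b > 0 \<and> c = 0) \<or>
     (a < 0 \<and> b \<in> \<int> \<and> c = a powi \<lfloor>b\<rfloor>)"

definition binop_val :: "real \<Rightarrow> real \<Rightarrow> real \<Rightarrow> bool" where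
  "binop_val a b c \<longleftrightarrow>
     c = a + b \<or> c = a - b \<or> c = b - a \<or> c = a * b \<or>
     (b \<noteq> 0 \<and> c = a / b) \<or> (a \<noteq> 0 \<and> c = b / a) \<or>
     real_pow_val a b c \<or> real_pow_val b a c"

text \<open>V S x means x \<in> V(S); the least such relation (inductive).\<close>
inductive V :: "real multiset \<Rightarrow> real \<Rightarrow> bool" where
  single: "V {#x#} x"
| binop: "\<lbrakk>A \<noteq> {#}; B \<noteq> {#}; V A a; V B b; binop_val a b c\<rbrakk> \<Longrightarrow> V (A + B) c"
| factorial: "\<lbrakk>V S a; a \<in> \<int>; a \<ge> 0\<rbrakk> \<Longrightarrow> V S (fact (nat \<lfloor>a\<rfloor>))"

definition selfcondensable :: "nat \<Rightarrow> bool" where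
  "selfcondensable N \<longleftrightarrow> N > 0 \<and> V (digit_mset N) (real N)"

end

theory Submission
  imports Defs
begin

text \<open>The last digit of \<open>5 ^ n\<close> is \<open>5\<close>, so it suffices to build the exponent \<open>n\<close> from the other
  digits. For large \<open>n\<close> there are about \<open>0.7 n\<close> of them; among them are many pairs \<open>x, x\<close>, each giving
  \<open>(x - x)! = 1\<close>, and \<open>O(log n)\<close> ones build \<open>n\<close> via its binary expansion, while every leftover digit is
  swallowed as an exponent of \<open>1\<close>. For \<open>n \<le> 68\<close> a computation checks that the greedy choice of digits
  with sum \<open>n\<close> leaves a remainder evaluating to \<open>1\<close>, except for \<open>n = 4, 8, 10\<close>, done by hand.\<close>

lemma V_nonempty: "V A a \<Longrightarrow> A \<noteq> {#}"
  by (induction rule: V.induct) auto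

lemma V_binop: "V A a \<Longrightarrow> V B b \<Longrightarrow> binop_val a b c \<Longrightarrow> V (A + B) c"
  using V.binop V_nonempty by blast

lemma V_add: "V A a \<Longrightarrow> V B b \<Longrightarrow> V (A + B) (a + b)"
  by (rule V_binop) (auto simp: binop_val_def)

lemma V_diff: "V A a \<Longrightarrow> V B b \<Longrightarrow> V (A + B) (a - b)"
  by (rule V_binop) (auto simp: binop_val_def)

lemma V_mult: "V A a \<Longrightarrow> V B b \<Longrightarrow> V (A + B) (a * b)"
  by (rule V_binop) (auto simp: binop_val_def)

lemma V_power: "V A a \<Longrightarrow> V B (of_nat k) \<Longrightarrow> 0 < a \<Longrightarrow> V (A + B) (a ^ k)"
  by (rule V_binop) (auto simp: binop_val_def real_pow_val_def powr_realpow)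

lemma V_fact: "V A (of_nat k) \<Longrightarrow> V A (fact k)"
  using V.factorial[of A "of_nat k"] by simp

lemma V_sum_list: "xs \<noteq> [] \<Longrightarrow> V (mset (map real xs)) (real (sum_list xs))"
proof (induction xs)
  case Nil
  then show ?case by simp
next
  case (Cons x xs)
  show ?case
  proof (cases "xs = []")
    case True
    then show ?thesis using V.single[of "real x"] by simp
  next
    case False
    have "V ({#real x#} + mset (map real xs)) (real x + real (sum_list xs))"
      by (rule V_add[OF V.single Cons.IH[OF False]])
    then show ?thesis by simp
  qed
qed

subsection \<open>Multisets evaluating to one\<close>

lemma V_one_add: "V M 1 \<Longrightarrow> V (M + W) 1"
proof (induction W)
  case empty
  then show ?case by simp
next
  case (add x W)
  \<comment> \<open>\<open>1 ^ x = 1\<close> swallows one more element.\<close>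
  have "V ((M + W) + {#x#}) 1"
    by (rule V_binop[OF add.IH[OF add.prems] V.single]) (auto simp: binop_val_def real_pow_val_def)
  then show ?case by simp
qed

lemma V_one_subset: "V U 1 \<Longrightarrow> U \<subseteq># M \<Longrightarrow> V M 1"
  by (metis V_one_add subset_mset.add_diff_inverse)

lemma V_one_pair: "V {#x, x#} 1"
proof -
  have "V ({#x#} + {#x#}) (of_nat 0)"
    using V_diff[OF V.single V.single, of x x] by simp
  from V_fact[OF this] show ?thesis by simp
qed

lemma V_one_zero: "V {#0#} 1"
  using V_fact[of "{#0#}" 0] V.single[of 0] by simp

lemma V_one_if_repeated: "2 \<le> count M x \<Longrightarrow> V M 1"
  by (rule V_one_subset[OF V_one_pair, of x]) (simp add: subseteq_mset_def)

lemma V_one_if_zero_or_one: "0 \<in># M \<or> 1 \<in># M \<Longrightarrow> V M 1"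
  using V_one_subset[OF V_one_zero] V_one_subset[OF V.single[of 1]] by auto

lemma V_mult_one: "V A a \<Longrightarrow> V R 1 \<Longrightarrow> V (A + R) a"
  using V_mult[of A a R 1] by simp

subsection \<open>Greedy choice of a sub-multiset with given sum\<close>

fun greedy_split :: "nat \<Rightarrow> nat list \<Rightarrow> nat list \<times> nat list" where
  "greedy_split k [] = ([], [])"
| "greedy_split k (d # ds) =
     (if d \<le> k then apfst (Cons d) (greedy_split (k - d) ds)
      else apsnd (Cons d) (greedy_split k ds))"

lemma mset_greedy_split:
  "greedy_split k ds = (A, R) \<Longrightarrow> mset ds = mset A + mset R"
  by (induction k ds arbitrary: A R rule: greedy_split.induct)
    (auto split: if_splits prod.splits simp: apfst_def apsnd_def map_prod_def)

definition greedy_ok :: "nat \<Rightarrow> nat list \<Rightarrow> bool" where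
  "greedy_ok n ds \<longleftrightarrow> (case greedy_split n (rev (sort ds)) of (A, R) \<Rightarrow>
     A \<noteq> [] \<and> sum_list A = n \<and> (R = [] \<or> 0 \<in> set R \<or> 1 \<in> set R \<or> \<not> distinct R))"

lemma V_one_if_not_distinct:
  assumes "\<not> distinct xs"
  shows "V (mset xs) 1"
proof -
  obtain x where "count (mset xs) x \<noteq> (if x \<in> set xs then 1 else 0)"
    using assms distinct_count_atmost_1 by blast
  then have "count (mset xs) x \<noteq> 0" "count (mset xs) x \<noteq> 1"
    by (auto split: if_splits simp: count_mset_0_iff)
  then show ?thesis by (intro V_one_if_repeated[of _ x]) linarith
qed

lemma V_one_list:
  assumes "0 \<in> set R \<or> 1 \<in> set R \<or> \<not> distinct R"
  shows "V (mset (map real R)) 1"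
proof (cases "distinct R")
  case True
  with assms show ?thesis by (intro V_one_if_zero_or_one) force
next
  case False
  then show ?thesis by (intro V_one_if_not_distinct) (simp add: distinct_map)
qed

lemma V_if_greedy_ok:
  assumes "greedy_ok n ds"
  shows "V (mset (map real ds)) (real n)"
proof -
  obtain A R where split: "greedy_split n (rev (sort ds)) = (A, R)" by fastforce
  with assms have A: "A \<noteq> []" "sum_list A = n"
    and R: "R = [] \<or> 0 \<in> set R \<or> 1 \<in> set R \<or> \<not> distinct R"
    by (auto simp: greedy_ok_def)
  have ds: "mset (map real ds) = mset (map real A) + mset (map real R)"
    using mset_greedy_split[OF split] by (simp add: mset_map)
  have VA: "V (mset (map real A)) (real n)"
    using V_sum_list[OF A(1)] A(2) by simp
  show ?thesis
  proof (cases "R = []")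
    case True
    then show ?thesis using VA ds by simp
  next
    case False
    then show ?thesis using V_mult_one[OF VA V_one_list] R ds by auto
  qed
qed

subsection \<open>Building a natural number from ones\<close>

text \<open>\<open>unit_cost k\<close> ones suffice to build \<open>k\<close> via \<open>2m = (1 + 1) m\<close> and \<open>2m + 1 = 1 + (1 + 1) m\<close>.\<close>

fun unit_cost :: "nat \<Rightarrow> nat" where
  "unit_cost 0 = 0"
| "unit_cost (Suc 0) = 1"
| "unit_cost n = (if even n then unit_cost (n div 2) + 2 else unit_cost (n div 2) + 3)"

lemma V_of_nat_from_ones:
  assumes "1 \<le> k" "unit_cost k \<le> length Ms" "\<forall>M\<in>set Ms. V M 1"
  shows "V (sum_list Ms) (of_nat k)"
  using assms
proof (induction k arbitrary: Ms rule: less_induct)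
  case (less k)
  show ?case
  proof (cases "k = 1")
    case True
    with less.prems obtain M Ms' where "Ms = M # Ms'" by (cases Ms) auto
    with True less.prems show ?thesis using V_one_add by auto
  next
    case False
    with less.prems obtain m where k: "k = Suc (Suc m)"
      by (metis One_nat_def Suc_le_D not_less_eq_eq le_Suc_eq)
    define q where "q = k div 2"
    have q: "1 \<le> q" "q < k" using k by (auto simp: q_def)
    show ?thesis
    proof (cases "even k")
      case True
      with less.prems k obtain M1 M2 Ms'
        where Ms: "Ms = M1 # M2 # Ms'" "unit_cost q \<le> length Ms'"
        by (cases Ms rule: remdups_adj.cases) (auto simp: q_def)
      have "V (sum_list Ms') (of_nat q)" using less.IH[OF q(2,1)] less.prems Ms by auto
      then have "V ((M1 + M2) + sum_list Ms') ((1 + 1) * of_nat q)"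
        using less.prems Ms by (intro V_mult V_add) auto
      then show ?thesis using Ms True by (auto simp: q_def add.assoc elim!: evenE)
    next
      case False
      with less.prems k obtain M1 M2 M3 Ms'
        where Ms: "Ms = M1 # M2 # M3 # Ms'" "unit_cost q \<le> length Ms'"
        by (cases Ms rule: remdups_adj.cases; cases "tl (tl Ms)") (auto simp: q_def)
      have "V (sum_list Ms') (of_nat q)" using less.IH[OF q(2,1)] less.prems Ms by auto
      then have "V (M3 + ((M1 + M2) + sum_list Ms')) (1 + (1 + 1) * of_nat q)"
        using less.prems Ms by (intro V_add V_mult) auto
      then show ?thesis using Ms False by (auto simp: q_def ac_simps elim!: oddE)
    qed
  qed
qed

lemma unit_cost_le: "1 \<le> n \<Longrightarrow> n < 2 ^ j \<Longrightarrow> unit_cost n + 2 \<le> 3 * j"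
proof (induction n arbitrary: j rule: less_induct)
  case (less n)
  show ?case
  proof (cases "n = 1")
    case True
    with less.prems show ?thesis by (cases j) auto
  next
    case False
    with less.prems obtain m where n: "n = Suc (Suc m)"
      by (metis One_nat_def Suc_le_D not_less_eq_eq le_Suc_eq)
    with less.prems obtain i where j: "j = Suc i" by (cases j) auto
    have "unit_cost (n div 2) + 2 \<le> 3 * i"
      using less.IH[of "n div 2" i] less.prems n j by auto
    then show ?thesis using n j by auto
  qed
qed

lemma size_le_card_set_mset: "(\<forall>x. count T x \<le> 1) \<Longrightarrow> size T \<le> card (set_mset T)"
proof (induction T)
  case empty
  then show ?case by simp
next
  case (add x T)
  have "\<forall>y. count T y \<le> 1" using add.prems by (metis count_add_mset le_SucI le_Suc_eq Suc_le_mono)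
  moreover have "x \<notin># T" using add.prems[rule_format, of x] by (simp add: count_eq_zero_iff)
  ultimately show ?case using add.IH by simp
qed

lemma pair_decomposition:
  assumes "finite D" "set_mset T \<subseteq> D"
  shows "\<exists>Ms R. T = sum_list Ms + R \<and> (\<forall>M\<in>set Ms. \<exists>x. M = {#x, x#}) \<and>
    size T \<le> 2 * length Ms + card D"
  using assms(2)
proof (induction "size T" arbitrary: T rule: less_induct)
  case less
  show ?case
  proof (cases "\<exists>x. 2 \<le> count T x")
    case True
    then obtain x where "2 \<le> count T x" by blast
    then have "{#x, x#} \<subseteq># T" by (simp add: subseteq_mset_def)
    then obtain T' where T: "T = {#x, x#} + T'" by (metis subset_mset.add_diff_inverse)
    then have "size T' < size T" "set_mset T' \<subseteq> D" using less.prems by auto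
    from less.hyps[OF this] obtain Ms R where "T' = sum_list Ms + R"
      "\<forall>M\<in>set Ms. \<exists>x. M = {#x, x#}" "size T' \<le> 2 * length Ms + card D" by blast
    with T show ?thesis by (intro exI[of _ "{#x, x#} # Ms"] exI[of _ R]) auto
  next
    case False
    then have "size T \<le> card (set_mset T)"
      by (intro size_le_card_set_mset) (metis not_le Suc_1 Suc_leI)
    also have "\<dots> \<le> card D" using less.prems assms(1) by (simp add: card_mono)
    finally show ?thesis by (intro exI[of _ "[]"] exI[of _ T]) auto
  qed
qed

subsection \<open>Decimal digits\<close>

declare digits.simps [simp del]

lemma digits_0 [simp]: "digits 0 = []"
  by (simp add: digits.simps)

lemma digits_pos: "0 < N \<Longrightarrow> digits N = N mod 10 # digits (N div 10)"
  by (simp add: digits.simps)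

lemma digits_lt_10: "d \<in> set (digits N) \<Longrightarrow> d < 10"
  by (induction N rule: digits.induct) (subst (asm) digits.simps, auto split: if_splits)

lemma length_digits_gt: "10 ^ k \<le> N \<Longrightarrow> k < length (digits N)"
proof (induction k arbitrary: N)
  case 0
  then show ?case by (simp add: digits_pos)
next
  case (Suc k)
  then have "k < length (digits (N div 10))"
    by (intro Suc.IH) (simp add: less_eq_div_iff_mult_less_eq mult.commute)
  moreover have "0 < N" using Suc.prems by (metis le_0_eq not_gr0 power_not_zero zero_neq_numeral)
  ultimately show ?case by (simp add: digits_pos)
qed

fun mult_digits :: "nat \<Rightarrow> nat \<Rightarrow> nat list \<Rightarrow> nat list" where
  "mult_digits k c [] = digits c"
| "mult_digits k c (d # ds) = (k * d + c) mod 10 # mult_digits k ((k * d + c) div 10) ds"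

lemma digits_mult_add: "0 < k \<Longrightarrow> digits (k * N + c) = mult_digits k c (digits N)"
proof (induction N arbitrary: c rule: digits.induct)
  case (1 N)
  show ?case
  proof (cases "N = 0")
    case False
    define t where "t = k * (N mod 10) + c"
    have "k * N = k * (N mod 10 + 10 * (N div 10))" by simp
    also have "\<dots> = k * (N mod 10) + 10 * (k * (N div 10))"
      by (simp only: distrib_left mult.left_commute)
    finally have "k * N + c = t + 10 * (k * (N div 10))" by (simp add: t_def)
    also have "\<dots> = t mod 10 + 10 * (k * (N div 10) + t div 10)"
      using div_mult_mod_eq[of t 10] by (simp add: algebra_simps)
    finally have eq: "k * N + c = t mod 10 + 10 * (k * (N div 10) + t div 10)" .
    have "0 < k * N + c" using False 1 by simp
    then have "digits (k * N + c) = t mod 10 # digits (k * (N div 10) + t div 10)"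
      by (subst digits_pos) (simp_all add: eq)
    with "1.IH" False 1 show ?thesis by (simp add: digits_pos t_def)
  qed simp
qed

text \<open>\<open>check_powers P b m n (digits (b ^ n))\<close> tests \<open>P\<close> on the digits of \<open>b ^ n, \<dots>, b ^ (n + m - 1)\<close>,
  computing each digit list from the previous one.\<close>

function check_powers :: "(nat \<Rightarrow> nat list \<Rightarrow> bool) \<Rightarrow> nat \<Rightarrow> nat \<Rightarrow> nat \<Rightarrow> nat list \<Rightarrow> bool" where
  "check_powers P b m n ds =
     (if m = 0 then True else P n ds \<and> check_powers P b (m - 1) (Suc n) (mult_digits b 0 ds))"
  by pat_completeness auto
termination by (relation "measure (\<lambda>(P, b, m, n, ds). m)") auto

declare check_powers.simps [simp del]

lemma check_powers_digits:
  assumes "check_powers P b m n (digits (b ^ n))" "0 < b" "n \<le> k" "k < n + m"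
  shows "P k (digits (b ^ k))"
  using assms(1,3,4)
proof (induction m arbitrary: n)
  case (Suc m)
  have "digits (b ^ Suc n) = mult_digits b 0 (digits (b ^ n))"
    using digits_mult_add[OF \<open>0 < b\<close>, of "b ^ n" 0] by simp
  with Suc.prems(1) have "P n (digits (b ^ n))"
    and check_next: "check_powers P b m (Suc n) (digits (b ^ Suc n))"
    by (simp_all add: check_powers.simps[of P b "Suc m" n])
  show ?case
  proof (cases "k = n")
    case False
    with Suc.prems(2,3) have "Suc n \<le> k" "k < Suc n + m" by simp_all
    from Suc.IH[OF check_next this] show ?thesis .
  qed (use \<open>P n (digits (b ^ n))\<close> in simp)
qed simp

subsection \<open>Powers of five\<close>

lemma five_pow_mod_10: "1 \<le> n \<Longrightarrow> (5::nat) ^ n mod 10 = 5"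
proof (induction n rule: dec_induct)
  case (step n)
  have "(5::nat) ^ Suc n mod 10 = 5 * (5 ^ n mod 10) mod 10"
    by (simp add: mod_mult_right_eq)
  with step.IH show ?case by simp
qed simp

text \<open>All decimal digits but the units digit (\<open>digits\<close> lists the least significant first).\<close>

abbreviation higher_digits :: "nat \<Rightarrow> real multiset" where
  "higher_digits N \<equiv> mset (map real (tl (digits N)))"

lemma V_five_pow_from_exponent:
  assumes "1 \<le> n" "V (higher_digits (5 ^ n)) (real n)"
  shows "V (digit_mset (5 ^ n)) (real (5 ^ n))"
proof -
  have "digit_mset (5 ^ n) = {#5#} + higher_digits (5 ^ n)"
    using five_pow_mod_10[OF assms(1)] by (simp add: digit_mset_def digits_pos)
  with V_power[OF V.single assms(2)] show ?thesis by simp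
qed

lemma ten_pow_le_five_pow_pow2: "8 \<le> j \<Longrightarrow> (10::nat) ^ (6 * j + 6) \<le> 5 ^ 2 ^ (j - 1)"
proof (induction j rule: dec_induct)
  case (step j)
  have "(2::nat) ^ 7 \<le> 2 ^ (j - 1)" using step.hyps by (intro power_increasing) auto
  then have "(5::nat) ^ 9 \<le> 5 ^ 2 ^ (j - 1)" by (intro power_increasing) auto
  then have a: "(10::nat) ^ 6 \<le> 5 ^ 2 ^ (j - 1)" by simp
  have "(10::nat) ^ (6 * Suc j + 6) = 10 ^ (6 * j + 6) * 10 ^ 6"
    by (simp only: power_add[symmetric]) (simp add: algebra_simps)
  also have "\<dots> \<le> 5 ^ 2 ^ (j - 1) * 5 ^ 2 ^ (j - 1)" using step.IH a by (rule mult_mono) auto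
  also have "\<dots> = 5 ^ 2 ^ (Suc j - 1)"
    using step.hyps by (cases j) (auto simp flip: power_add)
  finally show ?case .
qed simp

lemma five_pow_ge_ten_pow: "69 \<le> n \<Longrightarrow> \<exists>j. n < 2 ^ j \<and> 10 ^ (6 * j + 6) \<le> (5::nat) ^ n"
proof -
  assume n: "69 \<le> n"
  obtain j where j: "2 ^ j \<le> n" "n < 2 ^ (j + 1)" using ex_power_ivl1[of 2 n] n by auto
  have "6 \<le> j"
  proof (rule ccontr)
    assume "\<not> 6 \<le> j"
    then have "(2::nat) ^ (j + 1) \<le> 2 ^ 6" by (intro power_increasing) auto
    with j n show False by simp
  qed
  show ?thesis
  proof (cases "j = 6")
    case True
    have "(10::nat) ^ 48 \<le> 5 ^ 69" by simp
    also have "\<dots> \<le> 5 ^ n" using n by (intro power_increasing) auto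
    finally show ?thesis using True j by (intro exI[of _ 7]) auto
  next
    case False
    with \<open>6 \<le> j\<close> have "(10::nat) ^ (6 * (j + 1) + 6) \<le> 5 ^ 2 ^ j"
      using ten_pow_le_five_pow_pow2[of "j + 1"] by simp
    also have "\<dots> \<le> 5 ^ n" using j by (intro power_increasing) auto
    finally show ?thesis using j by (intro exI[of _ "j + 1"]) auto
  qed
qed

lemma V_exponent_large:
  assumes n: "69 \<le> n"
  shows "V (higher_digits (5 ^ n)) (real n)"
proof -
  define T where "T = higher_digits (5 ^ n)"
  define D where "D = real ` {..<10}"
  have "set (tl (digits (5 ^ n))) \<subseteq> set (digits (5 ^ n))"
    by (cases "digits (5 ^ n)") auto
  then have D: "finite D" "card D \<le> 10" "set_mset T \<subseteq> D"
    unfolding D_def T_def using card_image_le[of "{..<10::nat}" real]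
    by (auto dest: digits_lt_10)
  obtain j where j: "n < 2 ^ j" "10 ^ (6 * j + 6) \<le> (5::nat) ^ n"
    using five_pow_ge_ten_pow[OF n] by blast
  have "6 * j + 6 \<le> size T"
    using length_digits_gt[OF j(2)] by (simp add: T_def)
  moreover obtain Ms R where MR: "T = sum_list Ms + R" "\<forall>M\<in>set Ms. \<exists>x. M = {#x, x#}"
    "size T \<le> 2 * length Ms + card D"
    using pair_decomposition[OF D(1,3)] by blast
  moreover have "unit_cost n + 2 \<le> 3 * j" using unit_cost_le[OF _ j(1)] n by simp
  ultimately have cost: "unit_cost n \<le> length Ms" using D(2) by linarith
  have ones: "\<forall>M\<in>set Ms. V M 1" using MR(2) V_one_pair by auto
  have "1 \<le> unit_cost n" using n by (cases n rule: unit_cost.cases) auto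
  with cost obtain M Ms' where Ms: "Ms = M # Ms'" by (cases Ms) auto
  have "V (sum_list ((M + R) # Ms')) (of_nat n)"
    using n ones Ms cost V_one_add by (intro V_of_nat_from_ones) auto
  then show ?thesis using MR(1) Ms by (simp add: T_def ac_simps)
qed

lemma V_exceptional_exponents:
  assumes "n \<in> {4, 8, 10}"
  shows "V (higher_digits (5 ^ n)) (real n)"
  using assms
proof (elim insertE)
  assume "n = 4"
  \<comment> \<open>\<open>5 ^ 4 = 625\<close>, and \<open>4 = 6 - 2\<close>\<close>
  have "V ({#6#} + {#2#}) (6 - 2)" by (intro V_diff V.single)
  with \<open>n = 4\<close> show ?thesis by (simp add: digits.simps add_mset_commute)
next
  assume "n = 8"
  \<comment> \<open>\<open>5 ^ 8 = 390625\<close>, and \<open>8 = 2 ^ 3 \<cdot> 1\<close> with \<open>1 = (0! ^ 6) ^ 9\<close>\<close>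
  have "V ({#2#} + {#3#}) (2 ^ 3)"
    using V_power[of "{#2#}" 2 "{#3#}" 3] by (simp add: V.single)
  then have "V (({#2#} + {#3#}) + {#0, 6, 9#}) (2 ^ 3)"
    by (rule V_mult_one) (simp add: V_one_if_zero_or_one)
  with \<open>n = 8\<close> show ?thesis by (simp add: digits.simps add_mset_commute)
next
  assume "n = 10"
  \<comment> \<open>\<open>5 ^ 10 = 9765625\<close>, and \<open>10 = 2 \<cdot> 5 \<cdot> 1\<close> with \<open>1 = ((6 - 6)! ^ 7) ^ 9\<close>\<close>
  have "V (({#2#} + {#5#}) + {#6, 6, 7, 9#}) (2 * 5)"
    by (intro V_mult_one V_mult V.single V_one_if_repeated[of _ 6]) simp
  with \<open>n = 10\<close> show ?thesis by (simp add: digits.simps add_mset_commute)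
qed simp

lemma V_exponent_small:
  assumes "2 \<le> n" "n \<le> 68"
  shows "V (higher_digits (5 ^ n)) (real n)"
proof -
  let ?P = "\<lambda>n ds. n \<in> {4, 8, 10} \<or> greedy_ok n (tl ds)"
  have "check_powers ?P 5 67 2 (digits (5 ^ 2))"
    by (simp add: check_powers.simps greedy_ok_def digits.simps)
  from check_powers_digits[OF this] assms have "?P n (digits (5 ^ n))" by simp
  then show ?thesis using V_exceptional_exponents V_if_greedy_ok by blast
qed

theorem theorem7p4:
  fixes n :: nat
  assumes "n \<ge> 1"
  shows "selfcondensable (5 ^ n)"
proof -
  have "V (digit_mset (5 ^ n)) (real (5 ^ n))"
  proof (cases "n = 1")
    case True
    then show ?thesis by (simp add: digit_mset_def digits_pos V.single)
  next
    case False
    with assms V_exponent_small V_exponent_large have "V (higher_digits (5 ^ n)) (real n)"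
      by (cases "n \<le> 68") auto
    with assms show ?thesis by (rule V_five_pow_from_exponent)
  qed
  then show ?thesis by (simp add: selfcondensable_def)
qed

end
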